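(* Let $S$ be a numerical semigroup with minimal generators $a_1<a_2<\cdots<a_\nu$ ($\nu\ge2$), multiplicity $\mu=a_1$ and conductor $c$, and suppose $a_2>\frac{c+\mu}{3}$. Let $P=\{a_1,\dots,a_\nu\}$, $q_1=|\{a\in P\setminus\{\mu\}: \tfrac13(c+\mu)<a<\tfrac12(c+\mu)\}|$ and $q_2=|\{a\in P\setminus\{\mu\}: \tfrac12(c+\mu)\le a<\tfrac23(c+\mu)\}|$. Then: (a) $\mu\le \nu+\frac{q_1(q_1+1)}{2}+q_1q_2$; (b) $\mu\le\frac12\nu(\nu+1)$; (c) $q_1\ge \frac{2\nu-1-\sqrt{(2\nu+1)^2-8\mu}}{2}$.
   Context: A numerical semigroup is a submonoid $S\subseteq\mathbb{N}$ with finite complement. The minimal generating set has cardinality $\nu$ (embedding dimension); its smallest element $\mu$ is the multiplicity. The conductor $c$ is the least integer with $c+\mathbb{N}\subseteq S$. *)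

theory Defs
  imports Complex_Main
begin

definition numerical_semigroup :: "nat set \<Rightarrow> bool" where
  "numerical_semigroup S \<longleftrightarrow> 0 \<in> S \<and> (\<forall>x\<in>S. \<forall>y\<in>S. x + y \<in> S) \<and> finite (UNIV - S)"

inductive_set monoid_gen :: "nat set \<Rightarrow> nat set" for A :: "nat set" where
  zero: "0 \<in> monoid_gen A"
| add: "a \<in> A \<Longrightarrow> x \<in> monoid_gen A \<Longrightarrow> a + x \<in> monoid_gen A"

definition minimal_generating_set :: "nat set \<Rightarrow> nat set \<Rightarrow> bool" where
  "minimal_generating_set A S \<longleftrightarrow> monoid_gen A = S \<and> (\<forall>B. B \<subset> A \<longrightarrow> monoid_gen B \<noteq> S)"

definition conductor :: "nat set \<Rightarrow> nat" where
  "conductor S = (LEAST c. \<forall>n. c + n \<in> S)"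

end

theory Submission
  imports Defs
begin

text \<open>Every residue class modulo the multiplicity \<mu> contains a least element of S (an Apery
  element); it lies below c + \<mu>, and its representation never uses the generator \<mu>.
  So the \<mu> Apery elements are distinct elements of the monoid generated by the other
  generators, all smaller than c + \<mu>. When every generator exceeds (c + \<mu>)/3, such an element
  is 0, a generator, or a sum a + b of two generators with a \<le> b; then a < (c + \<mu>)/2 and
  b < 2(c + \<mu>)/3, which are counted by q1 and q2. This gives (a); (b) and (c) follow from (a)
  and q1 + q2 \<le> \<nu> - 1 by elementary algebra.\<close>

lemma monoid_gen_Diff_singleton:
  assumes "x \<in> monoid_gen P"
    and "\<mu> \<le> x \<Longrightarrow> x - \<mu> \<notin> monoid_gen P"
  shows "x \<in> monoid_gen (P - {\<mu>})"
  using assms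
proof (induction x rule: monoid_gen.induct)
  case zero
  show ?case by (rule monoid_gen.zero)
next
  case (add a y)
  show ?case
  proof (cases "a = \<mu>")
    case True
    then show ?thesis using add by simp
  next
    case False
    have "y \<in> monoid_gen (P - {\<mu>})"
    proof (rule add.IH)
      assume "\<mu> \<le> y"
      show "y - \<mu> \<notin> monoid_gen P"
      proof
        assume "y - \<mu> \<in> monoid_gen P"
        with add.hyps(1) have "a + (y - \<mu>) \<in> monoid_gen P" by (rule monoid_gen.add)
        with \<open>\<mu> \<le> y\<close> add.prems show False by simp
      qed
    qed
    with False add.hyps show ?thesis by (simp add: monoid_gen.add)
  qed
qed

lemma monoid_gen_small_elements:
  assumes "x \<in> monoid_gen A" "x < K" "\<And>a. a \<in> A \<Longrightarrow> K < 3 * a"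
  shows "x = 0 \<or> x \<in> A \<or> (\<exists>a\<in>A. \<exists>b\<in>A. a \<le> b \<and> x = a + b)"
proof (cases "x = 0")
  case False
  then obtain a y where a: "a \<in> A" "y \<in> monoid_gen A" "x = a + y"
    using assms(1) by (blast elim: monoid_gen.cases)
  show ?thesis
  proof (cases "y = 0")
    case True
    then show ?thesis using a by simp
  next
    case False
    then obtain b z where b: "b \<in> A" "z \<in> monoid_gen A" "y = b + z"
      using a(2) by (blast elim: monoid_gen.cases)
    have "z = 0"
    proof (rule ccontr)
      assume "z \<noteq> 0"
      then obtain d v where "d \<in> A" "z = d + v"
        using b(2) by (blast elim: monoid_gen.cases)
      then show False
        using a(3) b(3) assms(2) assms(3)[OF a(1)] assms(3)[OF b(1)] assms(3)[OF \<open>d \<in> A\<close>]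
        by linarith
    qed
    then have "x = a + b" "x = b + a" using a(3) b(3) by simp_all
    then show ?thesis using a(1) b(1) nat_le_linear by blast
  qed
qed simp

lemma conductor_le_imp_mem:
  assumes "numerical_semigroup S" "conductor S \<le> x"
  shows "x \<in> S"
proof -
  have "finite (UNIV - S)" using assms(1) unfolding numerical_semigroup_def by simp
  then obtain N where "\<forall>y\<in>UNIV - S. y < N" using finite_nat_set_iff_bounded by blast
  then have "\<forall>n. N + n \<in> S" by fastforce
  then have "\<forall>n. conductor S + n \<in> S" unfolding conductor_def by (rule LeastI)
  then show ?thesis using assms(2) by (metis le_add_diff_inverse)
qed

lemma least_in_residue_class:
  assumes "numerical_semigroup S" "r < m"
  obtains w where "w \<in> S" "w mod m = r" "w < conductor S + m" "m \<le> w \<Longrightarrow> w - m \<notin> S"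
proof -
  define w where "w = (LEAST x. x \<in> S \<and> x mod m = r)"
  have "conductor S \<le> m * conductor S + r" using assms(2) by (cases m) auto
  with assms(1) have "m * conductor S + r \<in> S" by (rule conductor_le_imp_mem)
  moreover have "(m * conductor S + r) mod m = r" using assms(2) by simp
  ultimately have ex: "\<exists>x. x \<in> S \<and> x mod m = r" by blast
  have w: "w \<in> S" "w mod m = r" using LeastI_ex[OF ex] unfolding w_def by auto
  have not_below: "w - m \<notin> S" if "m \<le> w"
  proof
    assume "w - m \<in> S"
    moreover have "(w - m) mod m = r" using that w(2) le_mod_geq by simp
    ultimately have "w \<le> w - m" unfolding w_def by (simp add: Least_le)
    with that assms(2) show False by linarith
  qed
  moreover have "w < conductor S + m"
    using not_below conductor_le_imp_mem[OF assms(1), of "w - m"] by fastforce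
  ultimately show ?thesis using that w by blast
qed

lemma multiplicity_le_card_small_elements:
  assumes "numerical_semigroup S" "S = monoid_gen P" "\<mu> \<in> P"
  shows "\<mu> \<le> card {x \<in> monoid_gen (P - {\<mu>}). x < conductor S + \<mu>}"
proof -
  have ex: "\<forall>r\<in>{..<\<mu>}. \<exists>w. w \<in> S \<and> w mod \<mu> = r \<and> w < conductor S + \<mu> \<and> (\<mu> \<le> w \<longrightarrow> w - \<mu> \<notin> S)"
  proof
    fix r assume "r \<in> {..<\<mu>}"
    then obtain w where "w \<in> S" "w mod \<mu> = r" "w < conductor S + \<mu>" "\<mu> \<le> w \<Longrightarrow> w - \<mu> \<notin> S"
      using least_in_residue_class[OF assms(1)] by blast
    then show "\<exists>w. w \<in> S \<and> w mod \<mu> = r \<and> w < conductor S + \<mu> \<and> (\<mu> \<le> w \<longrightarrow> w - \<mu> \<notin> S)"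
      by blast
  qed
  from bchoice[OF ex] obtain w where w: "\<forall>r\<in>{..<\<mu>}.
      w r \<in> S \<and> w r mod \<mu> = r \<and> w r < conductor S + \<mu> \<and> (\<mu> \<le> w r \<longrightarrow> w r - \<mu> \<notin> S)"
    by blast
  have "w ` {..<\<mu>} \<subseteq> {x \<in> monoid_gen (P - {\<mu>}). x < conductor S + \<mu>}"
    using w unfolding assms(2) by (auto intro: monoid_gen_Diff_singleton)
  moreover have "inj_on w {..<\<mu>}" using w by (intro inj_onI) metis
  moreover have "finite {x \<in> monoid_gen (P - {\<mu>}). x < conductor S + \<mu>}" by simp
  ultimately have "card {..<\<mu>} \<le> card {x \<in> monoid_gen (P - {\<mu>}). x < conductor S + \<mu>}"
    by (intro card_inj_on_le)
  then show ?thesis by simp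
qed

lemma card_ordered_pairs:
  fixes X :: "'a::linorder set"
  assumes "finite X"
  shows "2 * card {(a, b). a \<in> X \<and> b \<in> X \<and> a \<le> b} = card X * (card X + 1)"
proof -
  define L where "L = {(a, b). a \<in> X \<and> b \<in> X \<and> a \<le> b}"
  define L' where "L' = {(a, b). a \<in> X \<and> b \<in> X \<and> b \<le> a}"
  have fin: "finite L" "finite L'"
    unfolding L_def L'_def by (auto intro: finite_subset[of _ "X \<times> X"] simp: assms)
  have "L \<union> L' = X \<times> X" "L \<inter> L' = (\<lambda>a. (a, a)) ` X" unfolding L_def L'_def by auto
  moreover have "bij_betw prod.swap L L'" unfolding L_def L'_def by (auto simp: bij_betw_def)
  then have "card L' = card L" by (simp add: bij_betw_same_card)
  moreover have "card L + card L' = card (L \<union> L') + card (L \<inter> L')"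
    using card_Un_Int fin by blast
  moreover have "card ((\<lambda>a. (a, a)) ` X) = card X" by (simp add: card_image inj_on_def)
  ultimately show ?thesis unfolding L_def[symmetric] by (simp add: card_cartesian_product)
qed

lemma card_small_elements_le:
  fixes A :: "nat set"
  assumes "finite A" "\<And>a. a \<in> A \<Longrightarrow> K < 3 * a"
  defines "Q1 \<equiv> {a \<in> A. 2 * a < K}" and "Q2 \<equiv> {a \<in> A. K \<le> 2 * a \<and> 3 * a < 2 * K}"
  shows "2 * card {x \<in> monoid_gen A. x < K}
           \<le> 2 + 2 * card A + card Q1 * (card Q1 + 1) + 2 * card Q1 * card Q2"
proof -
  define L where "L = {(a, b). a \<in> Q1 \<and> b \<in> Q1 \<and> a \<le> b}"
  have fin: "finite Q1" "finite Q2" "finite L"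
    unfolding Q1_def Q2_def L_def using assms(1) by (auto intro: finite_subset[of _ "A \<times> A"])
  have "L \<inter> Q1 \<times> Q2 = {}" unfolding L_def Q1_def Q2_def by auto
  then have card_pairs: "2 * card (L \<union> Q1 \<times> Q2) = card Q1 * (card Q1 + 1) + 2 * card Q1 * card Q2"
    using fin card_ordered_pairs[OF fin(1)] by (simp add: L_def card_Un_disjoint card_cartesian_product)
  have sum_pair: "x \<in> case_prod (+) ` (L \<union> Q1 \<times> Q2)"
    if "a \<in> A" "b \<in> A" "a \<le> b" "x = a + b" "x < K" for x a b
  proof -
    have "a \<in> Q1" "b \<in> Q1 \<or> b \<in> Q2" using that assms(2)[of a] unfolding Q1_def Q2_def by auto
    then have "(a, b) \<in> L \<union> Q1 \<times> Q2" unfolding L_def using that by auto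
    then show ?thesis using that(4) by force
  qed
  have "{x \<in> monoid_gen A. x < K} \<subseteq> insert 0 (A \<union> case_prod (+) ` (L \<union> Q1 \<times> Q2))"
    using monoid_gen_small_elements[OF _ _ assms(2)] sum_pair by blast
  then have "card {x \<in> monoid_gen A. x < K} \<le> card (insert 0 (A \<union> case_prod (+) ` (L \<union> Q1 \<times> Q2)))"
    using fin assms(1) by (intro card_mono) auto
  also have "\<dots> \<le> Suc (card (A \<union> case_prod (+) ` (L \<union> Q1 \<times> Q2)))"
    using fin assms(1) by (simp add: card_insert_if)
  also have "\<dots> \<le> Suc (card A + card (case_prod (+) ` (L \<union> Q1 \<times> Q2)))"
    using card_Un_le by simp
  also have "\<dots> \<le> Suc (card A + card (L \<union> Q1 \<times> Q2))"
    using fin by (simp add: card_image_le)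
  finally show ?thesis using card_pairs by linarith
qed

lemma multiplicity_le_generators_and_pairs:
  fixes S P :: "nat set" and \<mu> :: nat
  defines "K \<equiv> conductor S + \<mu>"
  defines "Q1 \<equiv> {a \<in> P - {\<mu>}. 2 * a < K}" and "Q2 \<equiv> {a \<in> P - {\<mu>}. K \<le> 2 * a \<and> 3 * a < 2 * K}"
  assumes "numerical_semigroup S" "S = monoid_gen P" "finite P" "\<mu> \<in> P"
    and "\<And>a. a \<in> P - {\<mu>} \<Longrightarrow> K < 3 * a"
  shows "2 * \<mu> \<le> 2 * card P + card Q1 * (card Q1 + 1) + 2 * card Q1 * card Q2"
proof -
  have "2 * \<mu> \<le> 2 * card {x \<in> monoid_gen (P - {\<mu>}). x < K}"
    using multiplicity_le_card_small_elements[OF assms(4,5,7)] unfolding K_def by simp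
  also have "\<dots> \<le> 2 + 2 * card (P - {\<mu>}) + card Q1 * (card Q1 + 1) + 2 * card Q1 * card Q2"
    unfolding Q1_def Q2_def using assms(6) by (intro card_small_elements_le assms(8)) simp
  finally have "2 * \<mu> \<le> 2 + 2 * card (P - {\<mu>}) + card Q1 * (card Q1 + 1) + 2 * card Q1 * card Q2" .
  moreover have "card (P - {\<mu>}) = card P - 1" using assms(6,7) by simp
  moreover have "0 < card P" using assms(6,7) card_gt_0_iff by blast
  ultimately show ?thesis by linarith
qed

lemma nat_compare_real_fractions:
  fixes k a :: nat
  shows "real k / 3 < real a \<longleftrightarrow> k < 3 * a" "real a < real k / 2 \<longleftrightarrow> 2 * a < k"
    "real k / 2 \<le> real a \<longleftrightarrow> k \<le> 2 * a" "real a < 2 * real k / 3 \<longleftrightarrow> 3 * a < 2 * k"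
  by linarith+

lemma multiplicity_le_generators_and_pairs_real:
  fixes S P :: "nat set" and \<mu> :: nat
  defines "K \<equiv> real (conductor S) + real \<mu>"
  defines "q1 \<equiv> card {a \<in> P - {\<mu>}. K / 3 < real a \<and> real a < K / 2}"
    and "q2 \<equiv> card {a \<in> P - {\<mu>}. K / 2 \<le> real a \<and> real a < 2 * K / 3}"
  assumes "numerical_semigroup S" "S = monoid_gen P" "finite P" "\<mu> \<in> P"
    and "\<And>a. a \<in> P - {\<mu>} \<Longrightarrow> K / 3 < real a"
  shows "real \<mu> \<le> real (card P) + real q1 * (real q1 + 1) / 2 + real q1 * real q2"
proof -
  define k where "k = conductor S + \<mu>"
  have K: "K = real k" unfolding K_def k_def by simp
  have big: "k < 3 * a" if "a \<in> P - {\<mu>}" for a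
    using assms(8)[OF that] unfolding K by (simp only: nat_compare_real_fractions)
  have "q1 = card {a \<in> P - {\<mu>}. k < 3 * a \<and> 2 * a < k}"
    and q2: "q2 = card {a \<in> P - {\<mu>}. k \<le> 2 * a \<and> 3 * a < 2 * k}"
    unfolding q1_def q2_def K by (simp_all only: nat_compare_real_fractions)
  moreover have "{a \<in> P - {\<mu>}. k < 3 * a \<and> 2 * a < k} = {a \<in> P - {\<mu>}. 2 * a < k}"
    using big by auto
  ultimately have q1: "q1 = card {a \<in> P - {\<mu>}. 2 * a < k}" by simp
  have "2 * \<mu> \<le> 2 * card P + q1 * (q1 + 1) + 2 * q1 * q2"
    using multiplicity_le_generators_and_pairs[OF assms(4-7)] big unfolding q1 q2 k_def by blast
  then have "real (2 * \<mu>) \<le> real (2 * card P + q1 * (q1 + 1) + 2 * q1 * q2)"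
    by (simp only: of_nat_le_iff)
  then have "2 * real \<mu> \<le> 2 * real (card P) + real q1 * (real q1 + 1) + 2 * real q1 * real q2"
    by (simp add: algebra_simps)
  then show ?thesis by linarith
qed

lemma card_disjoint_filters_le:
  assumes "finite A" "\<And>a. a \<in> A \<Longrightarrow> P a \<Longrightarrow> \<not> Q a"
  shows "card {a \<in> A. P a} + card {a \<in> A. Q a} \<le> card A"
proof -
  have "card {a \<in> A. P a} + card {a \<in> A. Q a} = card ({a \<in> A. P a} \<union> {a \<in> A. Q a})"
    using assms by (intro card_Un_disjoint[symmetric]) auto
  also have "\<dots> \<le> card A" using assms(1) by (intro card_mono) auto
  finally show ?thesis .
qed

lemma quadratic_bounds:
  fixes m x y z :: real
  assumes "0 \<le> y" "0 \<le> z" "y + z \<le> x - 1" "m \<le> x + y * (y + 1) / 2 + y * z"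
  shows "m \<le> x * (x + 1) / 2" "(2 * x - 1 - sqrt ((2 * x + 1)^2 - 8 * m)) / 2 \<le> y"
proof -
  have "y * z \<le> y * (x - 1 - y)" using assms by (intro mult_left_mono) auto
  moreover have "2 * m \<le> 2 * x + y * (y + 1) + 2 * (y * z)" using assms(4) by simp
  ultimately have "2 * m \<le> 2 * x + y * (y + 1) + 2 * (y * (x - 1 - y))" by linarith
  then have key: "2 * m \<le> 2 * x + 2 * x * y - y^2 - y" by (simp add: algebra_simps power2_eq_square)
  have "0 \<le> (x - y) * (x - y - 1)" using assms by (intro mult_nonneg_nonneg) auto
  then show "m \<le> x * (x + 1) / 2"
    using key by (simp add: algebra_simps power2_eq_square)
  have "(2 * x - 1 - 2 * y)^2 \<le> (2 * x + 1)^2 - 8 * m"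
    using key by (simp add: algebra_simps power2_eq_square)
  then have "2 * x - 1 - 2 * y \<le> sqrt ((2 * x + 1)^2 - 8 * m)" by (rule real_le_rsqrt)
  then show "(2 * x - 1 - sqrt ((2 * x + 1)^2 - 8 * m)) / 2 \<le> y" by simp
qed

theorem proposition2p2:
  fixes S P :: "nat set" and \<nu> \<mu> c a2 q1 q2 :: nat
  assumes "numerical_semigroup S"
    and "minimal_generating_set P S"
    and "\<nu> = card P"
    and "\<nu> \<ge> 2"
    and "\<mu> = Min P"
    and "c = conductor S"
    and "a2 = Min (P - {\<mu>})"
    and "real a2 > (real c + real \<mu>) / 3"
    and "q1 = card {a \<in> P - {\<mu>}. (real c + real \<mu>) / 3 < real a \<and> real a < (real c + real \<mu>) / 2}"
    and "q2 = card {a \<in> P - {\<mu>}. (real c + real \<mu>) / 2 \<le> real a \<and> real a < 2 * (real c + real \<mu>) / 3}"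
  shows "real \<mu> \<le> real \<nu> + real q1 * (real q1 + 1) / 2 + real q1 * real q2 \<and>
         real \<mu> \<le> real \<nu> * (real \<nu> + 1) / 2 \<and>
         real q1 \<ge> (2 * real \<nu> - 1 - sqrt ((2 * real \<nu> + 1)^2 - 8 * real \<mu>)) / 2"
proof -
  have "finite P" using assms(3,4) card.infinite by fastforce
  moreover have "\<mu> \<in> P" using assms(3,4,5) calculation by (metis Min_in card.empty not_numeral_le_zero)
  moreover have "S = monoid_gen P" using assms(2) unfolding minimal_generating_set_def by simp
  moreover have "(real c + real \<mu>) / 3 < real a" if "a \<in> P - {\<mu>}" for a
    using assms(7,8) Min_le[OF _ that] \<open>finite P\<close> by fastforce
  ultimately have a: "real \<mu> \<le> real \<nu> + real q1 * (real q1 + 1) / 2 + real q1 * real q2"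
    unfolding assms(3,6,9,10) using assms(1) by (intro multiplicity_le_generators_and_pairs_real)
  have "q1 + q2 \<le> card (P - {\<mu>})"
    unfolding assms(9,10) using \<open>finite P\<close> by (intro card_disjoint_filters_le) auto
  then have "real q1 + real q2 \<le> real \<nu> - 1" using \<open>finite P\<close> \<open>\<mu> \<in> P\<close> assms(3,4) by simp
  from quadratic_bounds[OF of_nat_0_le_iff of_nat_0_le_iff this a] a show ?thesis by blast
qed

end
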